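(* Let $s_1,\dots,s_k$ be positive integers. For a continuous function $f$ on $[0,1]$ define $D_{s_1,\dots,s_k}f$ as the iterated integral $$D_{s_1,\dots,s_k}f=\int_0^1 x_0^{s_1-1}x_1\,\chi_{s_2}\cdots\chi_{s_k}\,\overline{f(t)\,dt},$$ where $x_0=\frac{dt}{t}$, $x_1=\frac{dt}{1-t}$, and $\chi_1=\overline{x_1}$, $\chi_2=\overline{x_0}\,x_1$, $\chi_s=\overline{x_0}\,x_0^{s-2}x_1$ for $s\ge3$. Then for every positive integer $n$, $$D_{s_1,\dots,s_k}\big(n x^{n-1}\big)=\sum_{n\ge n_k\ge n_{k-1}\ge\cdots\ge n_1\ge1}\frac{1}{n_1^{s_1}n_2^{s_2}\cdots n_k^{s_k}}.$$
   Context: Iterated integral with bars: for differential forms $\omega_j=g_j(t)\,dt$ on $[0,1]$, $\int_0^1\omega_1\omega_2\cdots\omega_m$ (with some of $\omega_2,\dots,\omega_m$ carrying a bar) denotes $\int_0^1 g_1(u_1)\,du_1\int_{I_2}g_2(u_2)\,du_2\cdots\int_{I_m}g_m(u_m)\,du_m$, where $I_j=(0,u_{j-1})$ if $\omega_j$ carries no bar and $I_j=(u_{j-1},1)$ if $\omega_j$ carries a bar. The first form never carries a bar. Thus the last factor $\overline{f(t)dt}$ means the innermost integral is $\int_{u}^1 f(t)\,dt$ where $u$ is the previous variable. *)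

theory Defs
  imports "HOL-Analysis.Analysis"
begin

text \<open>A one-form g(t) dt on [0,1], paired with a flag telling whether it carries a bar.\<close>
type_synonym form = "(real \<Rightarrow> real) \<times> bool"

fun itint :: "form list \<Rightarrow> real \<Rightarrow> real" where
  "itint [] u = 1"
| "itint ((g, b) # ws) u =
     (if b then integral {u..1} (\<lambda>t. g t * itint ws t)
           else integral {0..u} (\<lambda>t. g t * itint ws t))"

text \<open>Full iterated integral int_0^1 w_1 ... w_m; the first form is unbarred,
  so its range (0,1) is (0,u_0) with u_0 = 1.\<close>
definition iterated_integral :: "form list \<Rightarrow> real" where
  "iterated_integral ws = itint ws 1"

definition x0 :: "real \<Rightarrow> real" where "x0 t = 1 / t"
definition x1 :: "real \<Rightarrow> real" where "x1 t = 1 / (1 - t)"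

definition chi :: "nat \<Rightarrow> form list" where
  "chi s = (if s = 1 then [(x1, True)]
            else (x0, True) # replicate (s - 2) (x0, False) @ [(x1, False)])"

definition D :: "nat list \<Rightarrow> (real \<Rightarrow> real) \<Rightarrow> real" where
  "D ss f = iterated_integral
     (replicate (hd ss - 1) (x0, False) @ [(x1, False)] @ concat (map chi (tl ss)) @ [(f, True)])"

end

theory Submission
  imports Defs
begin

(* Every inner integral that occurs is a polynomial in its lower variable u which vanishes
   either at u = 0 or at u = 1; in both cases the neighbouring form dt/t resp. dt/(1-t)
   cancels that zero and leaves a polynomial \<Sum> c_m t^(m-1).  Integrating it over (0,u)
   divides the coefficients by m, integrating over (u,1) gives (1-u) times the polynomial
   with the tail sums \<Sum>_{M \<ge> m} c_M / M as coefficients.  Hence, starting from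
   \<integral>_u^1 n t^(n-1) dt = (1-u)(1 + u + ... + u^(n-1)), every block chi_s turns the
   coefficients a_M into the tail sums of a_M / M^s, and these nested tail sums are exactly
   the truncated multiple zeta-star sums. *)

definition harmonic_star_sum :: "nat list \<Rightarrow> nat \<Rightarrow> nat \<Rightarrow> real" where
  "harmonic_star_sum ss lo N =
    (\<Sum>ns \<in> {ns. length ns = length ss \<and> sorted ns \<and> set ns \<subseteq> {lo..N}}.
        \<Prod>i < length ss. 1 / real (ns ! i) ^ (ss ! i))"

lemma harmonic_star_sum_Nil [simp]: "harmonic_star_sum [] lo N = 1"
proof -
  have "{ns::nat list. length ns = 0 \<and> sorted ns \<and> set ns \<subseteq> {lo..N}} = {[]}"
    by auto
  then show ?thesis
    by (simp add: harmonic_star_sum_def)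
qed

lemma harmonic_star_sum_Cons:
  "harmonic_star_sum (s # ss) lo N = (\<Sum>m=lo..N. harmonic_star_sum ss m N / real m ^ s)"
proof -
  define T where "T m = {ns. length ns = length ss \<and> sorted ns \<and> set ns \<subseteq> {m..N}}" for m
  define f where "f ns = (\<Prod>i < length ss. 1 / real (ns ! i) ^ (ss ! i))" for ns
  have finite_T: "finite (T m)" for m
    by (rule finite_subset[of _ "{ns. set ns \<subseteq> {m..N} \<and> length ns = length ss}"])
      (auto simp: T_def finite_lists_length_eq)
  have tuples_eq: "{ns. length ns = length (s # ss) \<and> sorted ns \<and> set ns \<subseteq> {lo..N}}
      = (\<lambda>(m, ns). m # ns) ` (SIGMA m:{lo..N}. T m)"
  proof (intro set_eqI iffI)
    fix ns assume "ns \<in> {ns. length ns = length (s # ss) \<and> sorted ns \<and> set ns \<subseteq> {lo..N}}"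
    then obtain m ms where ns: "ns = m # ms" and "length ms = length ss" "sorted (m # ms)"
        "set (m # ms) \<subseteq> {lo..N}"
      by (cases ns) auto
    then have "m \<in> {lo..N}" "ms \<in> T m"
      by (auto simp: T_def)
    with ns show "ns \<in> (\<lambda>(m, ns). m # ns) ` (SIGMA m:{lo..N}. T m)"
      by force
  qed (auto simp: T_def subset_iff)
  have "harmonic_star_sum (s # ss) lo N
      = (\<Sum>(m, ns) \<in> (SIGMA m:{lo..N}. T m). 1 / real m ^ s * f ns)"
    unfolding harmonic_star_sum_def tuples_eq f_def
    by (subst sum.reindex) (auto simp: inj_on_def prod.lessThan_Suc_shift
        simp del: prod.lessThan_Suc intro!: sum.cong split: prod.splits)
  also have "\<dots> = (\<Sum>m=lo..N. \<Sum>ns\<in>T m. 1 / real m ^ s * f ns)"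
    by (simp add: sum.Sigma finite_T)
  also have "\<dots> = (\<Sum>m=lo..N. harmonic_star_sum ss m N / real m ^ s)"
    by (simp add: harmonic_star_sum_def T_def f_def sum_divide_distrib sum_distrib_left)
  finally show ?thesis .
qed

lemma has_integral_power_sum:
  fixes a b :: real
  assumes "a \<le> b"
  shows "((\<lambda>t. \<Sum>m=1..N. c m * t ^ (m - 1)) has_integral (\<Sum>m=1..N. c m * (b ^ m - a ^ m) / m)) {a..b}"
proof -
  define F where "F t = (\<Sum>m=1..N. c m * t ^ m / m)" for t :: real
  have "(F has_real_derivative (\<Sum>m=1..N. c m * t ^ (m - 1))) (at t within {a..b})" for t
  proof -
    have "(F has_real_derivative (\<Sum>m=1..N. c m * (real m * t ^ (m - 1)) / m)) (at t within {a..b})"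
      unfolding F_def by (intro derivative_eq_intros) auto
    moreover have "(\<Sum>m=1..N. c m * (real m * t ^ (m - 1)) / m) = (\<Sum>m=1..N. c m * t ^ (m - 1))"
      by (rule sum.cong) auto
    ultimately show ?thesis by simp
  qed
  then have "((\<lambda>t. \<Sum>m=1..N. c m * t ^ (m - 1)) has_integral (F b - F a)) {a..b}"
    by (intro fundamental_theorem_of_calculus[OF assms])
      (simp add: has_real_derivative_iff_has_vector_derivative)
  moreover have "F b - F a = (\<Sum>m=1..N. c m * (b ^ m - a ^ m) / m)"
    unfolding F_def sum_subtractf[symmetric] by (rule sum.cong) (auto simp: field_simps)
  ultimately show ?thesis by simp
qed

lemma one_minus_power_eq_sum: "1 - u ^ M = (1 - u) * (\<Sum>m=1..M. u ^ (m - 1))"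
  for u :: "'a::comm_ring_1"
  by (simp add: one_diff_power_eq sum.atLeast1_atMost_eq)

lemma sum_mult_one_minus_power:
  fixes u :: "'a::comm_ring_1"
  shows "(\<Sum>M=1..N. c M * (1 - u ^ M)) = (1 - u) * (\<Sum>m=1..N. (\<Sum>M=m..N. c M) * u ^ (m - 1))"
proof -
  have "(\<Sum>M=1..N. c M * (1 - u ^ M)) = (\<Sum>M=1..N. \<Sum>m\<in>{m\<in>{1..N}. m \<le> M}. (1 - u) * (c M * u ^ (m - 1)))"
    unfolding one_minus_power_eq_sum sum_distrib_left
    by (intro sum.cong refl) (auto simp: algebra_simps intro!: sum.cong)
  also have "\<dots> = (\<Sum>m=1..N. \<Sum>M\<in>{M\<in>{1..N}. m \<le> M}. (1 - u) * (c M * u ^ (m - 1)))"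
    by (rule sum.swap_restrict) auto
  also have "\<dots> = (1 - u) * (\<Sum>m=1..N. (\<Sum>M=m..N. c M) * u ^ (m - 1))"
    unfolding sum_distrib_left sum_distrib_right
    by (intro sum.cong) (auto intro!: sum.cong)
  finally show ?thesis .
qed

lemma itint_unbarred_power_sum:
  assumes "finite F" and "\<And>t. t \<in> {0..1} - F \<Longrightarrow> g t * itint ws t = (\<Sum>m=1..N. c m * t ^ (m - 1))"
    and "u \<in> {0..1}"
  shows "itint ((g, False) # ws) u = (\<Sum>m=1..N. c m / m * u ^ m)"
proof -
  have "((\<lambda>t. g t * itint ws t) has_integral (\<Sum>m=1..N. c m * (u ^ m - 0 ^ m) / m)) {0..u}"
    by (rule has_integral_spike_finite[OF assms(1) _ has_integral_power_sum]) (use assms in auto)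
  moreover have "(\<Sum>m=1..N. c m * (u ^ m - 0 ^ m) / m) = (\<Sum>m=1..N. c m / m * u ^ m)"
    by (intro sum.cong) auto
  ultimately show ?thesis
    by (simp add: integral_unique)
qed

lemma itint_barred_power_sum:
  assumes "finite F" and "\<And>t. t \<in> {0..1} - F \<Longrightarrow> g t * itint ws t = (\<Sum>m=1..N. c m * t ^ (m - 1))"
    and "u \<in> {0..1}"
  shows "itint ((g, True) # ws) u = (1 - u) * (\<Sum>m=1..N. (\<Sum>M=m..N. c M / M) * u ^ (m - 1))"
proof -
  have "((\<lambda>t. g t * itint ws t) has_integral (\<Sum>m=1..N. c m * (1 ^ m - u ^ m) / m)) {u..1}"
    by (rule has_integral_spike_finite[OF assms(1) _ has_integral_power_sum]) (use assms in auto)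
  moreover have "(\<Sum>m=1..N. c m * (1 ^ m - u ^ m) / m) = (\<Sum>m=1..N. c m / m * (1 - u ^ m))"
    by (intro sum.cong) auto
  ultimately show ?thesis
    using sum_mult_one_minus_power[of "\<lambda>m. c m / m"] by (simp add: integral_unique)
qed

lemma x0_mult_power_sum:
  assumes "t \<noteq> 0"
  shows "x0 t * (\<Sum>m=1..N. b m * t ^ m) = (\<Sum>m=1..N. b m * t ^ (m - 1))"
  unfolding sum_distrib_left x0_def
proof (intro sum.cong refl)
  fix m assume "m \<in> {1..N}"
  then have "t ^ m = t * t ^ (m - 1)"
    by (cases m) auto
  then show "1 / t * (b m * t ^ m) = b m * t ^ (m - 1)"
    using assms by simp
qed

lemma itint_x1_unbarred:
  assumes "\<forall>t\<in>{0..1}. itint ws t = (1 - t) * (\<Sum>m=1..N. a m * t ^ (m - 1))"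
  shows "\<forall>u\<in>{0..1}. itint ((x1, False) # ws) u = (\<Sum>m=1..N. a m / m * u ^ m)"
  by (intro ballI itint_unbarred_power_sum[of "{1}"]) (use assms in \<open>auto simp: x1_def\<close>)

lemma itint_x1_barred:
  assumes "\<forall>t\<in>{0..1}. itint ws t = (1 - t) * (\<Sum>m=1..N. a m * t ^ (m - 1))"
  shows "\<forall>u\<in>{0..1}. itint ((x1, True) # ws) u = (1 - u) * (\<Sum>m=1..N. (\<Sum>M=m..N. a M / M) * u ^ (m - 1))"
  by (intro ballI itint_barred_power_sum[of "{1}"]) (use assms in \<open>auto simp: x1_def\<close>)

lemma itint_x0_barred:
  assumes "\<forall>t\<in>{0..1}. itint ws t = (\<Sum>m=1..N. b m * t ^ m)"
  shows "\<forall>u\<in>{0..1}. itint ((x0, True) # ws) u = (1 - u) * (\<Sum>m=1..N. (\<Sum>M=m..N. b M / M) * u ^ (m - 1))"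
  by (intro ballI itint_barred_power_sum[of "{0}"]) (use assms x0_mult_power_sum in auto)

lemma itint_x0_unbarred:
  assumes "\<forall>t\<in>{0..1}. itint ws t = (\<Sum>m=1..N. b m * t ^ m)"
  shows "\<forall>u\<in>{0..1}. itint ((x0, False) # ws) u = (\<Sum>m=1..N. b m / m * u ^ m)"
  by (intro ballI itint_unbarred_power_sum[of "{0}"]) (use assms x0_mult_power_sum in auto)

lemma itint_x0_power_unbarred:
  assumes "\<forall>t\<in>{0..1}. itint ws t = (\<Sum>m=1..N. b m * t ^ m)"
  shows "\<forall>u\<in>{0..1}. itint (replicate j (x0, False) @ ws) u = (\<Sum>m=1..N. b m / real m ^ j * u ^ m)"
proof (induction j)
  case 0
  then show ?case using assms by simp
next
  case (Suc j)
  have "\<forall>u\<in>{0..1}. itint ((x0, False) # replicate j (x0, False) @ ws) u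
      = (\<Sum>m=1..N. b m / real m ^ j / m * u ^ m)"
    by (rule itint_x0_unbarred[OF Suc])
  then show ?case
    by (simp add: field_simps)
qed

lemma itint_chi:
  assumes "\<forall>t\<in>{0..1}. itint ws t = (1 - t) * (\<Sum>m=1..N. a m * t ^ (m - 1))" and "s > 0"
  shows "\<forall>u\<in>{0..1}. itint (chi s @ ws) u = (1 - u) * (\<Sum>m=1..N. (\<Sum>M=m..N. a M / real M ^ s) * u ^ (m - 1))"
proof (cases "s = 1")
  case True
  then show ?thesis
    using itint_x1_barred[OF assms(1)] by (simp add: chi_def)
next
  case False
  define k where "k = s - 2"
  have k: "s = Suc (Suc k)"
    using \<open>s > 0\<close> False by (simp add: k_def)
  have chi_s: "chi s @ ws = (x0, True) # replicate k (x0, False) @ (x1, False) # ws"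
    by (simp add: chi_def k)
  have weight: "a M / M / real M ^ k / M = a M / real M ^ s" for M
    by (simp add: k)
  show ?thesis
    using itint_x0_barred[OF itint_x0_power_unbarred[OF itint_x1_unbarred[OF assms(1)], of k]]
    unfolding chi_s weight .
qed

lemma itint_chis_power_deriv:
  assumes "\<forall>s\<in>set ss. s > 0" and "n > 0"
  shows "\<forall>u\<in>{0..1}. itint (concat (map chi ss) @ [(\<lambda>x. real n * x ^ (n - 1), True)]) u
           = (1 - u) * (\<Sum>m=1..n. harmonic_star_sum ss m n * u ^ (m - 1))"
  using assms(1)
proof (induction ss)
  case Nil
  define c where "c m = (if m = n then real n else 0)" for m
  have "(\<Sum>m=1..n. c m * t ^ (m - 1)) = real n * t ^ (n - 1) * itint [] t" for t :: real
  proof -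
    have "(\<Sum>m=1..n. c m * t ^ (m - 1)) = (\<Sum>m=1..n. if m = n then real n * t ^ (n - 1) else 0)"
      by (intro sum.cong) (auto simp: c_def)
    then show ?thesis
      using \<open>n > 0\<close> by simp
  qed
  then have "\<forall>u\<in>{0..1}. itint [(\<lambda>x. real n * x ^ (n - 1), True)] u
      = (1 - u) * (\<Sum>m=1..n. (\<Sum>M=m..n. c M / M) * u ^ (m - 1))"
    by (intro ballI itint_barred_power_sum[of "{}"]) auto
  moreover have "(\<Sum>M=m..n. c M / M) = 1" if "m \<in> {1..n}" for m
  proof -
    have "(\<Sum>M=m..n. c M / M) = (\<Sum>M=m..n. if M = n then 1 else 0)"
      using \<open>n > 0\<close> by (intro sum.cong) (auto simp: c_def)
    then show ?thesis
      using that by simp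
  qed
  ultimately show ?case
    by simp
next
  case (Cons s ss)
  then show ?case
    using itint_chi[where a="\<lambda>m. harmonic_star_sum ss m n"]
    by (simp add: harmonic_star_sum_Cons)
qed

theorem lemma4p3:
  fixes ss :: "nat list" and n :: nat
  assumes "ss \<noteq> []" and "\<forall>s \<in> set ss. s > 0" and "n > 0"
  shows "D ss (\<lambda>x. real n * x ^ (n - 1)) =
    (\<Sum>ns \<in> {ns. length ns = length ss \<and> sorted ns \<and> set ns \<subseteq> {1..n}}.
        \<Prod>i < length ss. 1 / real (ns ! i) ^ (ss ! i))"
proof -
  obtain k ss' where ss: "ss = Suc k # ss'"
    using assms(1,2) by (cases ss) (auto simp: gr0_conv_Suc)
  then have "\<forall>s\<in>set ss'. s > 0"
    using assms(2) by auto
  define ws where "ws = concat (map chi ss') @ [(\<lambda>x. real n * x ^ (n - 1), True)]"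
  have "\<forall>u\<in>{0..1}. itint (replicate k (x0, False) @ (x1, False) # ws) u
      = (\<Sum>m=1..n. harmonic_star_sum ss' m n / m / real m ^ k * u ^ m)"
    unfolding ws_def
    by (intro itint_x0_power_unbarred itint_x1_unbarred itint_chis_power_deriv) fact+
  then have "D ss (\<lambda>x. real n * x ^ (n - 1)) = (\<Sum>m=1..n. harmonic_star_sum ss' m n / m / real m ^ k)"
    by (simp add: D_def iterated_integral_def ss ws_def)
  also have "\<dots> = harmonic_star_sum ss 1 n"
    by (simp add: ss harmonic_star_sum_Cons)
  finally show ?thesis
    by (simp add: harmonic_star_sum_def)
qed

end
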